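(* Let $\mathcal{D}=(\mathcal{P},\mathcal{B},\mathcal{I})$ be a quasi-symmetric $(v,b,r,k,\lambda_1,0)$ SPBIBD of type $(k-1,t)$ with intersection numbers $x=0$ and $y>0$. Then for every block $B\in\mathcal{B}$ there exist blocks $B_1,B_2\in\mathcal{B}$, distinct from $B$, such that $|B\cap B_1|=0$ and $|B\cap B_2|=y$.
   Context: A design $\mathcal{D}=(\mathcal{P},\mathcal{B},\mathcal{I})$ is an incidence structure with $|\mathcal{P}|=v$, $|\mathcal{B}|=b$, every block incident with exactly $k$ points and every point with exactly $r$ blocks; standing assumptions: $v>k$ and $r<b$. For blocks, $B\cap B'$ denotes the set of points incident with both. $(p,B)$ is a flag if $p\in B$, a non-flag otherwise. $\mathcal{D}$ is a $(v,b,r,k,\lambda_1,\lambda_2)$ SPBIBD of type $(s,t)$ if (i) any two distinct points are together in exactly $\lambda_1$ or exactly $\lambda_2$ blocks; (ii) for every flag $(p,B)$, the number of points of $B$ other than $p$ lying with $p$ in exactly $\lambda_1$ blocks is $s$; (iii) for every non-flag $(p,B)$, the number of points of $B$ lying with $p$ in exactly $\lambda_1$ blocks is $t$. $\mathcal{D}$ is quasi-symmetric with intersection numbers $x<y$ if any two distinct blocks share exactly $x$ or $y$ points and both values occur. *)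

theory Defs
  imports Main
begin

text \<open>A design is an incidence structure (P, Bs, I): points P, blocks Bs (abstract
  objects, so repeated blocks are allowed), and incidence relation I.\<close>

definition block_pts :: "'p set \<Rightarrow> ('p \<Rightarrow> 'b \<Rightarrow> bool) \<Rightarrow> 'b \<Rightarrow> 'p set" where
  "block_pts P I B = {p \<in> P. I p B}"

definition design ::
  "'p set \<Rightarrow> 'b set \<Rightarrow> ('p \<Rightarrow> 'b \<Rightarrow> bool) \<Rightarrow> nat \<Rightarrow> nat \<Rightarrow> nat \<Rightarrow> nat \<Rightarrow> bool" where
  "design P Bs I v b r k \<longleftrightarrow>
     finite P \<and> finite Bs \<and> card P = v \<and> card Bs = b \<and>
     (\<forall>B\<in>Bs. card (block_pts P I B) = k) \<and>
     (\<forall>p\<in>P. card {B \<in> Bs. I p B} = r) \<and>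
     v > k \<and> r < b"

definition pair_count :: "'b set \<Rightarrow> ('p \<Rightarrow> 'b \<Rightarrow> bool) \<Rightarrow> 'p \<Rightarrow> 'p \<Rightarrow> nat" where
  "pair_count Bs I p q = card {B \<in> Bs. I p B \<and> I q B}"

definition SPBIBD ::
  "'p set \<Rightarrow> 'b set \<Rightarrow> ('p \<Rightarrow> 'b \<Rightarrow> bool) \<Rightarrow> nat \<Rightarrow> nat \<Rightarrow> nat \<Rightarrow> nat \<Rightarrow> nat \<Rightarrow> nat
     \<Rightarrow> nat \<Rightarrow> nat \<Rightarrow> bool" where
  "SPBIBD P Bs I v b r k l1 l2 s t \<longleftrightarrow>
     design P Bs I v b r k \<and>
     (\<forall>p\<in>P. \<forall>q\<in>P. p \<noteq> q \<longrightarrow> pair_count Bs I p q = l1 \<or> pair_count Bs I p q = l2) \<and>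
     (\<forall>p\<in>P. \<forall>B\<in>Bs. I p B \<longrightarrow>
        card {q \<in> block_pts P I B. q \<noteq> p \<and> pair_count Bs I p q = l1} = s) \<and>
     (\<forall>p\<in>P. \<forall>B\<in>Bs. \<not> I p B \<longrightarrow>
        card {q \<in> block_pts P I B. pair_count Bs I p q = l1} = t)"

definition quasi_symmetric ::
  "'p set \<Rightarrow> 'b set \<Rightarrow> ('p \<Rightarrow> 'b \<Rightarrow> bool) \<Rightarrow> nat \<Rightarrow> nat \<Rightarrow> bool" where
  "quasi_symmetric P Bs I x y \<longleftrightarrow>
     x < y \<and>
     (\<forall>B\<in>Bs. \<forall>B'\<in>Bs. B \<noteq> B' \<longrightarrow>
        card (block_pts P I B \<inter> block_pts P I B') = x \<or>
        card (block_pts P I B \<inter> block_pts P I B') = y) \<and>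
     (\<exists>B\<in>Bs. \<exists>B'\<in>Bs. B \<noteq> B' \<and> card (block_pts P I B \<inter> block_pts P I B') = x) \<and>
     (\<exists>B\<in>Bs. \<exists>B'\<in>Bs. B \<noteq> B' \<and> card (block_pts P I B \<inter> block_pts P I B') = y)"

end

theory Submission
  imports Defs
begin

text \<open>Counting the flags (p, B') with p on a fixed block B and B' another block shows that the
  intersection sizes of B with the other blocks sum to k(r - 1). In a quasi-symmetric design these
  sizes take only the values x < y, so the number of blocks meeting B in x points and in y points
  is determined by b, r, k, x, y alone and is the same for every block. Since some pair of blocks
  meets in x = 0 points and some pair meets in y points, every block has partners of both kinds.\<close>

definition meeting_blocks :: "'p set \<Rightarrow> 'b set \<Rightarrow> ('p \<Rightarrow> 'b \<Rightarrow> bool) \<Rightarrow> 'b \<Rightarrow> nat \<Rightarrow> 'b set" where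
  "meeting_blocks P Bs I B m =
     {B' \<in> Bs - {B}. card (block_pts P I B \<inter> block_pts P I B') = m}"

lemma card_other_blocks_through_point:
  assumes "design P Bs I v b r k" and "B \<in> Bs" and "p \<in> block_pts P I B"
  shows "card {B' \<in> Bs - {B}. I p B'} = r - 1"
proof -
  have "{B' \<in> Bs - {B}. I p B'} = {B' \<in> Bs. I p B'} - {B}" by auto
  moreover have "card {B' \<in> Bs. I p B'} = r" and "finite Bs"
    using assms unfolding design_def block_pts_def by auto
  ultimately show ?thesis
    using assms(2,3) by (simp add: card_Diff_singleton block_pts_def)
qed

lemma sum_card_block_inter:
  assumes des: "design P Bs I v b r k" and B: "B \<in> Bs"
  shows "(\<Sum>B'\<in>Bs - {B}. card (block_pts P I B \<inter> block_pts P I B')) = k * (r - 1)"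
proof -
  have fin: "finite Bs" "finite (block_pts P I B)" and k: "card (block_pts P I B) = k"
    using des B unfolding design_def block_pts_def by auto
  have "(\<Sum>B'\<in>Bs - {B}. card (block_pts P I B \<inter> block_pts P I B'))
      = (\<Sum>B'\<in>Bs - {B}. card {p \<in> block_pts P I B. I p B'})"
    by (intro sum.cong arg_cong[where f = card]) (auto simp: block_pts_def)
  also have "\<dots> = (r - 1) * card (block_pts P I B)"
    using fin card_other_blocks_through_point[OF des B] by (intro sum_multicount) auto
  finally show ?thesis using k by simp
qed

lemma card_meeting_blocks_eqs:
  assumes des: "design P Bs I v b r k" and B: "B \<in> Bs" and "x \<noteq> y"
    and two_values: "\<forall>B'\<in>Bs - {B}.
      card (block_pts P I B \<inter> block_pts P I B') \<in> {x, y}"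
  shows "card (meeting_blocks P Bs I B x) + card (meeting_blocks P Bs I B y) = b - 1"
    and "x * card (meeting_blocks P Bs I B x) + y * card (meeting_blocks P Bs I B y) = k * (r - 1)"
proof -
  let ?m = "\<lambda>B'. card (block_pts P I B \<inter> block_pts P I B')"
  have fin: "finite Bs" and b: "card Bs = b" using des unfolding design_def by auto
  have split: "Bs - {B} = meeting_blocks P Bs I B x \<union> meeting_blocks P Bs I B y"
    and disj: "meeting_blocks P Bs I B x \<inter> meeting_blocks P Bs I B y = {}"
    using two_values \<open>x \<noteq> y\<close> unfolding meeting_blocks_def by auto
  have fin_meet: "finite (meeting_blocks P Bs I B m)" for m
    using fin unfolding meeting_blocks_def by simp
  show "card (meeting_blocks P Bs I B x) + card (meeting_blocks P Bs I B y) = b - 1"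
    using card_Un_disjoint[OF fin_meet fin_meet disj] card_Diff_singleton[OF B] b
    by (simp flip: split)
  have "k * (r - 1) = (\<Sum>B'\<in>Bs - {B}. ?m B')"
    using sum_card_block_inter[OF des B] by simp
  also have "\<dots> = (\<Sum>B'\<in>meeting_blocks P Bs I B x. ?m B') + (\<Sum>B'\<in>meeting_blocks P Bs I B y. ?m B')"
    unfolding split using sum.union_disjoint[OF fin_meet fin_meet disj] .
  also have "\<dots> = x * card (meeting_blocks P Bs I B x) + y * card (meeting_blocks P Bs I B y)"
    unfolding meeting_blocks_def by simp
  finally show "x * card (meeting_blocks P Bs I B x) + y * card (meeting_blocks P Bs I B y)
      = k * (r - 1)" ..
qed

lemma quasi_symmetric_card_meeting_blocks_eq:
  assumes des: "design P Bs I v b r k" and qs: "quasi_symmetric P Bs I x y"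
    and B: "B \<in> Bs" and C: "C \<in> Bs" and m: "m \<in> {x, y}"
  shows "card (meeting_blocks P Bs I B m) = card (meeting_blocks P Bs I C m)"
proof -
  have "x < y" and "x \<noteq> y" using qs unfolding quasi_symmetric_def by simp_all
  have two_values: "\<forall>B'\<in>Bs - {D}. card (block_pts P I D \<inter> block_pts P I B') \<in> {x, y}"
    if "D \<in> Bs" for D
    using qs that unfolding quasi_symmetric_def by auto
  have y_count: "x * (b - 1) + (y - x) * card (meeting_blocks P Bs I D y) = k * (r - 1)"
    if "D \<in> Bs" for D
  proof -
    note eqs = card_meeting_blocks_eqs[OF des that \<open>x \<noteq> y\<close> two_values[OF that]]
    have "y = x + (y - x)" using \<open>x < y\<close> by simp
    then have "x * card (meeting_blocks P Bs I D x) + y * card (meeting_blocks P Bs I D y)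
        = x * (card (meeting_blocks P Bs I D x) + card (meeting_blocks P Bs I D y))
          + (y - x) * card (meeting_blocks P Bs I D y)"
      by (metis add_mult_distrib add_mult_distrib2 add.assoc)
    then show ?thesis using eqs \<open>x < y\<close> by simp
  qed
  have "(y - x) * card (meeting_blocks P Bs I B y) = (y - x) * card (meeting_blocks P Bs I C y)"
    using y_count[OF B] y_count[OF C] by (metis add_left_cancel)
  then have y_eq: "card (meeting_blocks P Bs I B y) = card (meeting_blocks P Bs I C y)"
    using \<open>x < y\<close> by simp
  note B_eqs = card_meeting_blocks_eqs[OF des B \<open>x \<noteq> y\<close> two_values[OF B]]
  note C_eqs = card_meeting_blocks_eqs[OF des C \<open>x \<noteq> y\<close> two_values[OF C]]
  show ?thesis
    using y_eq m B_eqs(1) C_eqs(1) \<open>x < y\<close> by auto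
qed

lemma quasi_symmetric_meeting_blocks_nonempty:
  assumes des: "design P Bs I v b r k" and qs: "quasi_symmetric P Bs I x y"
    and B: "B \<in> Bs" and m: "m \<in> {x, y}"
  shows "meeting_blocks P Bs I B m \<noteq> {}"
proof -
  obtain C C' where "C \<in> Bs" "C' \<in> Bs" "C \<noteq> C'"
      and "card (block_pts P I C \<inter> block_pts P I C') = m"
    using qs m unfolding quasi_symmetric_def by auto
  then have "card (meeting_blocks P Bs I C m) \<noteq> 0"
    using des unfolding meeting_blocks_def design_def by auto
  then show ?thesis
    using quasi_symmetric_card_meeting_blocks_eq[OF des qs B \<open>C \<in> Bs\<close> m] by auto
qed

theorem lemma4p3:
  fixes P :: "'p set" and Bs :: "'b set" and I :: "'p \<Rightarrow> 'b \<Rightarrow> bool"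
    and v b r k l1 t y :: nat
  assumes "SPBIBD P Bs I v b r k l1 0 (k - 1) t"
    and "quasi_symmetric P Bs I 0 y"
    and "y > 0"
  shows "\<forall>B\<in>Bs. \<exists>B1\<in>Bs. \<exists>B2\<in>Bs. B1 \<noteq> B \<and> B2 \<noteq> B \<and>
           card (block_pts P I B \<inter> block_pts P I B1) = 0 \<and>
           card (block_pts P I B \<inter> block_pts P I B2) = y"
proof
  fix B assume B: "B \<in> Bs"
  have des: "design P Bs I v b r k" using assms(1) unfolding SPBIBD_def by simp
  obtain B1 where "B1 \<in> meeting_blocks P Bs I B 0"
    using quasi_symmetric_meeting_blocks_nonempty[OF des assms(2) B] by blast
  moreover obtain B2 where "B2 \<in> meeting_blocks P Bs I B y"
    using quasi_symmetric_meeting_blocks_nonempty[OF des assms(2) B] by blast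
  ultimately show "\<exists>B1\<in>Bs. \<exists>B2\<in>Bs. B1 \<noteq> B \<and> B2 \<noteq> B \<and>
           card (block_pts P I B \<inter> block_pts P I B1) = 0 \<and>
           card (block_pts P I B \<inter> block_pts P I B2) = y"
    unfolding meeting_blocks_def by blast
qed

end
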